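(* Let $S$ be an additively reduced semidomain and $G$ a torsion-free abelian group. Let $f=\sum_{i=0}^n s_ix^{g_i}\in S[G]$ (with $g_0>g_1>\dots>g_n$ and $s_i\in S\setminus\{0\}$) satisfy $|\operatorname{supp}(f)|>1$. Then $f$ is irreducible if and only if $f$ is monolithic and $1\in\gcd(\{s_0,s_1,\dots,s_n\})$.
   Context: A semidomain is a subsemiring (containing $0$ and $1$) of an integral domain; all semirings are commutative. $S$ is additively reduced if $0$ is the only invertible element of $(S,+)$; $S^\times$ is the unit group of the multiplicative monoid $S\setminus\{0\}$. $G$ carries a fixed total order compatible with addition. $S[G]$ is the semidomain of formal finite sums $\sum_{g\in G}s_gx^g$ with polynomial operations; $\operatorname{supp}(f)$ is the set of exponents with nonzero coefficient. $f$ is irreducible if it is nonzero, a nonunit of $S[G]$, and $f=pq$ implies $p$ or $q$ is a unit. A nonzero $f\in S[G]$ is monolithic if whenever $f=pq$ with $p,q\in S[G]$, one of $p,q$ is a monomial $sx^g$. For $B\subseteq S\setminus\{0\}$, $\gcd(B)$ is the set of greatest common divisors of $B$ in the multiplicative monoid $S\setminus\{0\}$; thus $1\in\gcd(B)$ means every common divisor of all elements of $B$ is a unit of $S$. *)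

theory Defs
  imports "HOL-Library.Poly_Mapping"
begin

definition semidomain :: "'a::idom set \<Rightarrow> bool" where
  "semidomain S \<longleftrightarrow> 0 \<in> S \<and> 1 \<in> S \<and> (\<forall>a\<in>S. \<forall>b\<in>S. a + b \<in> S \<and> a * b \<in> S)"

definition add_reduced :: "'a::idom set \<Rightarrow> bool" where
  "add_reduced S \<longleftrightarrow> (\<forall>a\<in>S. (\<exists>b\<in>S. a + b = 0) \<longrightarrow> a = 0)"

text \<open>The monoid semidomain S[G], as finitely supported maps G \<rightarrow> S
  inside the monoid ring over the ambient domain (convolution product).\<close>
definition monoid_semiring :: "'a::idom set \<Rightarrow> ('g::comm_monoid_add \<Rightarrow>\<^sub>0 'a) set" where
  "monoid_semiring S = {f. \<forall>g. Poly_Mapping.lookup f g \<in> S}"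

definition unit_in :: "'b::{times,one} set \<Rightarrow> 'b \<Rightarrow> bool" where
  "unit_in R x \<longleftrightarrow> x \<in> R \<and> (\<exists>y\<in>R. x * y = 1)"

definition irreducible_in :: "'b::{times,one,zero} set \<Rightarrow> 'b \<Rightarrow> bool" where
  "irreducible_in R f \<longleftrightarrow> f \<in> R \<and> f \<noteq> 0 \<and> \<not> unit_in R f \<and>
     (\<forall>p\<in>R. \<forall>q\<in>R. f = p * q \<longrightarrow> unit_in R p \<or> unit_in R q)"

definition is_monomial :: "('g \<Rightarrow>\<^sub>0 'a::zero) \<Rightarrow> bool" where
  "is_monomial p \<longleftrightarrow> (\<exists>s g. p = Poly_Mapping.single g s)"

definition monolithic :: "'a::idom set \<Rightarrow> ('g::comm_monoid_add \<Rightarrow>\<^sub>0 'a) \<Rightarrow> bool" where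
  "monolithic S f \<longleftrightarrow> f \<noteq> 0 \<and>
     (\<forall>p\<in>monoid_semiring S. \<forall>q\<in>monoid_semiring S. f = p * q \<longrightarrow> is_monomial p \<or> is_monomial q)"

text \<open>1 \<in> gcd(B) in the multiplicative monoid S\<setminus>{0}: every common divisor
  of all elements of B is a unit of S.\<close>
definition one_in_gcd :: "'a::idom set \<Rightarrow> 'a set \<Rightarrow> bool" where
  "one_in_gcd S B \<longleftrightarrow>
     (\<forall>d\<in>S - {0}. (\<forall>b\<in>B. \<exists>t\<in>S - {0}. b = d * t) \<longrightarrow> unit_in S d)"

end

theory Submission imports Defs begin

text \<open>Because S is additively reduced, no cancellation can occur when two elements of S[G]
  are multiplied: every sum of an exponent of p and an exponent of q is an exponent of p q.
  Hence the units of S[G] are monomials, so an irreducible f is monolithic; and dividing a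
  common divisor d out of the coefficients of f leaves a cofactor with the same support, which
  is therefore not a unit, so d must be a unit. Conversely, the coefficient of a monomial factor
  of f divides every coefficient of f, so it is a unit of S, and the monomial is a unit of S[G].\<close>

lemma semidomain_zero: "semidomain S \<Longrightarrow> 0 \<in> S"
  by (simp add: semidomain_def)

lemma sum_mem_semidomain:
  assumes "semidomain S" and "\<And>x. x \<in> A \<Longrightarrow> h x \<in> S"
  shows "sum h A \<in> S"
  using assms(2)
  by (induction A rule: infinite_finite_induct)
    (use assms(1) in \<open>auto simp: semidomain_def\<close>)

lemma add_reduced_sum_eq_0_iff:
  assumes S: "semidomain S" "add_reduced S"
    and "finite A" and "\<And>x. x \<in> A \<Longrightarrow> h x \<in> S"
  shows "sum h A = 0 \<longleftrightarrow> (\<forall>x\<in>A. h x = 0)"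
  using assms(3,4)
proof (induction A rule: finite_induct)
  case (insert x F)
  have "sum h F \<in> S" using insert.prems by (intro sum_mem_semidomain[OF S(1)]) auto
  moreover have "h x \<in> S" using insert.prems by simp
  ultimately have "h x + sum h F = 0 \<Longrightarrow> h x = 0"
    using S(2) unfolding add_reduced_def by blast
  with insert show ?case by auto
qed simp

lemma lookup_mult_sum_keys:
  fixes p q :: "'g::comm_monoid_add \<Rightarrow>\<^sub>0 'a::idom"
  shows "Poly_Mapping.lookup (p * q) k =
    (\<Sum>(x, y) \<in> Poly_Mapping.keys p \<times> Poly_Mapping.keys q.
       Poly_Mapping.lookup p x * Poly_Mapping.lookup q y when k = x + y)"
proof -
  have "Poly_Mapping.lookup (p * q) k =
      (\<Sum>(x, y). Poly_Mapping.lookup p x * Poly_Mapping.lookup q y when k = x + y)"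
    unfolding lookup_mult prod_fun_def[symmetric]
    by (rule prod_fun_unfold_prod) (auto simp: in_keys_iff[symmetric])
  also have "\<dots> = (\<Sum>(x, y) \<in> Poly_Mapping.keys p \<times> Poly_Mapping.keys q.
      Poly_Mapping.lookup p x * Poly_Mapping.lookup q y when k = x + y)"
    by (rule Sum_any.expand_superset) (auto simp: in_keys_iff)
  finally show ?thesis .
qed

lemma add_mem_keys_mult:
  fixes p q :: "'g::comm_monoid_add \<Rightarrow>\<^sub>0 'a::idom"
  assumes S: "semidomain S" "add_reduced S"
    and p: "p \<in> monoid_semiring S" and q: "q \<in> monoid_semiring S"
    and a: "a \<in> Poly_Mapping.keys p" and b: "b \<in> Poly_Mapping.keys q"
  shows "a + b \<in> Poly_Mapping.keys (p * q)"
proof -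
  define h where
    "h = (\<lambda>(x, y). Poly_Mapping.lookup p x * Poly_Mapping.lookup q y when a + b = x + y)"
  have h_mem: "h z \<in> S" for z
    using p q S(1) by (auto simp: h_def when_def monoid_semiring_def semidomain_def split: prod.split)
  have "h (a, b) \<noteq> 0"
    using a b by (simp add: h_def in_keys_iff)
  moreover have "sum h (Poly_Mapping.keys p \<times> Poly_Mapping.keys q) = 0 \<longleftrightarrow>
      (\<forall>z \<in> Poly_Mapping.keys p \<times> Poly_Mapping.keys q. h z = 0)"
    by (rule add_reduced_sum_eq_0_iff[OF S]) (simp_all add: h_mem)
  ultimately have "sum h (Poly_Mapping.keys p \<times> Poly_Mapping.keys q) \<noteq> 0"
    using a b by blast
  then show ?thesis
    by (simp add: in_keys_iff lookup_mult_sum_keys h_def)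
qed

lemma card_keys_le_1_if_unit_in:
  fixes p :: "'g::cancel_comm_monoid_add \<Rightarrow>\<^sub>0 'a::idom"
  assumes S: "semidomain S" "add_reduced S" and unit: "unit_in (monoid_semiring S) p"
  shows "card (Poly_Mapping.keys p) \<le> 1"
proof -
  obtain q where q: "q \<in> monoid_semiring S" "p * q = 1" and p: "p \<in> monoid_semiring S"
    using unit by (auto simp: unit_in_def)
  then have "q \<noteq> 0" by auto
  then obtain b where b: "b \<in> Poly_Mapping.keys q" by fastforce
  have "a + b = 0" if "a \<in> Poly_Mapping.keys p" for a
    using add_mem_keys_mult[OF S p q(1) that b] q(2) by simp
  then have "\<forall>a\<in>Poly_Mapping.keys p. \<forall>a'\<in>Poly_Mapping.keys p. a = a'"
    by (metis add_right_cancel)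
  then show ?thesis by (simp add: card_le_Suc0_iff_eq)
qed

lemma is_monomial_if_card_keys_le_1:
  fixes p :: "'g \<Rightarrow>\<^sub>0 'a::zero"
  assumes "card (Poly_Mapping.keys p) \<le> 1"
  shows "is_monomial p"
proof (cases "p = 0")
  case True
  then show ?thesis by (metis is_monomial_def single_zero)
next
  case False
  then have "card (Poly_Mapping.keys p) \<noteq> 0" by simp
  with assms obtain g where g: "Poly_Mapping.keys p = {g}"
    by (metis card_1_singletonE le_antisym less_one not_le)
  have "p = Poly_Mapping.single g (Poly_Mapping.lookup p g)"
    by (rule poly_mapping_eqI) (use g in \<open>auto simp: lookup_single when_def in_keys_iff\<close>)
  then show ?thesis unfolding is_monomial_def by blast
qed

lemma single_mem_monoid_semiring_iff:
  "semidomain S \<Longrightarrow> Poly_Mapping.single g s \<in> monoid_semiring S \<longleftrightarrow> s \<in> S"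
  by (auto simp: monoid_semiring_def lookup_single when_def semidomain_zero dest: spec[of _ g])

lemma lookup_single_mult:
  fixes q :: "'g::ab_group_add \<Rightarrow>\<^sub>0 'a::idom"
  shows "Poly_Mapping.lookup (Poly_Mapping.single g s * q) h = s * Poly_Mapping.lookup q (h - g)"
proof -
  have "h = g + k \<longleftrightarrow> k = h - g" for k
    by (auto simp: algebra_simps)
  then show ?thesis
    by (simp add: lookup_mult lookup_single when_mult)
qed

lemma unit_in_monomial_factor:
  fixes f q :: "'g::ab_group_add \<Rightarrow>\<^sub>0 'a::idom"
  assumes S: "semidomain S" and gcd: "one_in_gcd S (Poly_Mapping.lookup f ` Poly_Mapping.keys f)"
    and f: "f = Poly_Mapping.single g s * q" "f \<noteq> 0"
    and s: "s \<in> S" and q: "q \<in> monoid_semiring S"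
  shows "unit_in (monoid_semiring S) (Poly_Mapping.single g s)"
proof -
  have "\<exists>t\<in>S - {0}. b = s * t" if "b \<in> Poly_Mapping.lookup f ` Poly_Mapping.keys f" for b
  proof -
    from that obtain h where "h \<in> Poly_Mapping.keys f" "b = Poly_Mapping.lookup f h" by blast
    moreover have "Poly_Mapping.lookup q (h - g) \<in> S"
      using q by (simp add: monoid_semiring_def)
    ultimately show ?thesis
      by (auto simp: f(1) lookup_single_mult in_keys_iff)
  qed
  moreover have "s \<noteq> 0" using f by auto
  ultimately have "unit_in S s"
    using gcd s unfolding one_in_gcd_def by blast
  then obtain u where u: "u \<in> S" "s * u = 1" by (auto simp: unit_in_def)
  then have "Poly_Mapping.single g s * Poly_Mapping.single (- g) u = 1"
    by (simp add: mult_single)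
  with u(1) show ?thesis
    by (auto simp: unit_in_def single_mem_monoid_semiring_iff[OF S] s)
qed

lemma factor_out_common_divisor:
  fixes f :: "'g::ab_group_add \<Rightarrow>\<^sub>0 'a::idom"
  assumes S: "semidomain S"
    and d: "\<forall>b\<in>Poly_Mapping.lookup f ` Poly_Mapping.keys f. \<exists>t\<in>S - {0}. b = d * t"
  obtains f' where "f' \<in> monoid_semiring S" "Poly_Mapping.keys f' = Poly_Mapping.keys f"
    and "f = Poly_Mapping.single 0 d * f'"
proof
  define quot where "quot b = (SOME t. t \<in> S - {0} \<and> b = d * t)" for b
  have quot: "quot (Poly_Mapping.lookup f k) \<in> S - {0} \<and>
      Poly_Mapping.lookup f k = d * quot (Poly_Mapping.lookup f k)"
    if "k \<in> Poly_Mapping.keys f" for k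
    unfolding quot_def by (rule someI_ex) (use d that in blast)
  define f' where "f' = Poly_Mapping.map quot f"
  have lookup_f': "Poly_Mapping.lookup f' k =
      (if k \<in> Poly_Mapping.keys f then quot (Poly_Mapping.lookup f k) else 0)" for k
    by (simp add: f'_def Poly_Mapping.map.rep_eq in_keys_iff when_def)
  show "f' \<in> monoid_semiring S"
    using quot semidomain_zero[OF S] by (simp add: monoid_semiring_def lookup_f')
  show "Poly_Mapping.keys f' = Poly_Mapping.keys f"
    using quot by (auto simp: in_keys_iff[of _ f'] lookup_f' split: if_splits)
  show "f = Poly_Mapping.single 0 d * f'"
  proof (rule poly_mapping_eqI)
    fix k
    show "Poly_Mapping.lookup f k = Poly_Mapping.lookup (Poly_Mapping.single 0 d * f') k"
      using quot[of k] by (simp add: lookup_single_mult lookup_f' in_keys_iff)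
  qed
qed

lemma unit_in_if_unit_in_single_0:
  fixes d :: "'a::idom"
  assumes S: "semidomain S"
    and "unit_in (monoid_semiring S) (Poly_Mapping.single (0::'g::ab_group_add) d)"
  shows "unit_in S d"
proof -
  have d: "Poly_Mapping.single (0::'g) d \<in> monoid_semiring S"
    and "\<exists>y \<in> monoid_semiring S. Poly_Mapping.single (0::'g) d * y = 1"
    using assms by (simp_all add: unit_in_def)
  then obtain y where y: "y \<in> monoid_semiring S" "Poly_Mapping.single (0::'g) d * y = 1"
    by blast
  have "d \<in> S"
    using d by (simp add: single_mem_monoid_semiring_iff[OF S])
  moreover have "Poly_Mapping.lookup y 0 \<in> S"
    using y(1) by (simp add: monoid_semiring_def)
  moreover have "d * Poly_Mapping.lookup y 0 = 1"
    using arg_cong[OF y(2), of "\<lambda>p. Poly_Mapping.lookup p 0"] by (simp add: lookup_single_mult)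
  ultimately show ?thesis by (auto simp: unit_in_def)
qed

lemma irreducible_in_imp_monolithic:
  fixes f :: "'g::cancel_comm_monoid_add \<Rightarrow>\<^sub>0 'a::idom"
  assumes S: "semidomain S" "add_reduced S" and irr: "irreducible_in (monoid_semiring S) f"
  shows "monolithic S f"
  using irr card_keys_le_1_if_unit_in[OF S] is_monomial_if_card_keys_le_1
  unfolding monolithic_def irreducible_in_def by blast

lemma irreducible_in_imp_one_in_gcd:
  fixes f :: "'g::ab_group_add \<Rightarrow>\<^sub>0 'a::idom"
  assumes S: "semidomain S" "add_reduced S" and irr: "irreducible_in (monoid_semiring S) f"
    and card: "card (Poly_Mapping.keys f) > 1"
  shows "one_in_gcd S (Poly_Mapping.lookup f ` Poly_Mapping.keys f)"
  unfolding one_in_gcd_def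
proof (intro ballI impI)
  fix d assume d: "d \<in> S - {0}"
    and divides: "\<forall>b\<in>Poly_Mapping.lookup f ` Poly_Mapping.keys f. \<exists>t\<in>S - {0}. b = d * t"
  obtain f' where f': "f' \<in> monoid_semiring S" "Poly_Mapping.keys f' = Poly_Mapping.keys f"
    and f_eq: "f = Poly_Mapping.single 0 d * f'"
    using factor_out_common_divisor[OF S(1) divides] .
  have "\<not> unit_in (monoid_semiring S) f'"
    using card_keys_le_1_if_unit_in[OF S, of f'] f'(2) card by auto
  moreover have "Poly_Mapping.single (0::'g) d \<in> monoid_semiring S"
    using d by (simp add: single_mem_monoid_semiring_iff[OF S(1)])
  moreover have "unit_in (monoid_semiring S) (Poly_Mapping.single (0::'g) d) \<or>
      unit_in (monoid_semiring S) f'"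
    using irr f'(1) \<open>Poly_Mapping.single (0::'g) d \<in> monoid_semiring S\<close>
    unfolding irreducible_in_def f_eq by blast
  ultimately have "unit_in (monoid_semiring S) (Poly_Mapping.single (0::'g) d)" by blast
  then show "unit_in S d" by (rule unit_in_if_unit_in_single_0[OF S(1)])
qed

lemma monolithic_one_in_gcd_imp_irreducible_in:
  fixes f :: "'g::ab_group_add \<Rightarrow>\<^sub>0 'a::idom"
  assumes S: "semidomain S" "add_reduced S" and f: "f \<in> monoid_semiring S"
    and card: "card (Poly_Mapping.keys f) > 1"
    and mono: "monolithic S f" and gcd: "one_in_gcd S (Poly_Mapping.lookup f ` Poly_Mapping.keys f)"
  shows "irreducible_in (monoid_semiring S) f"
proof -
  have f0: "f \<noteq> 0" using mono by (simp add: monolithic_def)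
  have monomial_factor_unit: "unit_in (monoid_semiring S) p"
    if "p \<in> monoid_semiring S" "q \<in> monoid_semiring S" "f = p * q" "is_monomial p" for p q
  proof -
    obtain g s where p: "p = Poly_Mapping.single g s"
      using \<open>is_monomial p\<close> by (auto simp: is_monomial_def)
    then have "s \<in> S"
      using \<open>p \<in> monoid_semiring S\<close>
      by (simp add: single_mem_monoid_semiring_iff[OF S(1)])
    with that show ?thesis
      using unit_in_monomial_factor[OF S(1) gcd _ f0] p by blast
  qed
  have "\<not> unit_in (monoid_semiring S) f"
    using card_keys_le_1_if_unit_in[OF S, of f] card by auto
  moreover have "unit_in (monoid_semiring S) p \<or> unit_in (monoid_semiring S) q"
    if "p \<in> monoid_semiring S" "q \<in> monoid_semiring S" "f = p * q" for p q
    using mono that monomial_factor_unit[of p q] monomial_factor_unit[of q p]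
    by (auto simp: monolithic_def mult.commute)
  ultimately show ?thesis
    using f f0 by (simp add: irreducible_in_def)
qed

theorem lemma3p1:
  fixes S :: "'a::idom set" and f :: "'g::linordered_ab_group_add \<Rightarrow>\<^sub>0 'a"
  assumes "semidomain S" and "add_reduced S"
    and "f \<in> monoid_semiring S"
    and "card (Poly_Mapping.keys f) > 1"
  shows "irreducible_in (monoid_semiring S) f \<longleftrightarrow>
           monolithic S f \<and> one_in_gcd S (Poly_Mapping.lookup f ` Poly_Mapping.keys f)"
  using irreducible_in_imp_monolithic[OF assms(1,2)]
    irreducible_in_imp_one_in_gcd[OF assms(1,2) _ assms(4)]
    monolithic_one_in_gcd_imp_irreducible_in[OF assms]
  by blast

end
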